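(* In the setting of the context, let $1\le i<j<k\le m$ be integers and $p',q,r$ integers such that $s_i^{p'}s_j^{q}s_k^{r}=e$ in $G_m$. Then $p'=q=r=0$.
   Context: $H$ is a finitely presented group with finite generating set $T$, containing a free subgroup $F$ of rank $p$ with free basis $\{d_1,\dots,d_p\}\subset T$ (standing assumption: $\mathrm{Dist}_F^H$ admits an exponentially bounded sequence of palindromic certificates in $F$). $F_x,F_y,F_z$ are free of rank $p$ with bases $\{x_i\},\{y_i\},\{z_i\}$. $G_1=[H\ast_{\langle d_i=x_iy_i^{-1}\rangle}(F_x\times F_y\times F_z)]\times\langle s_1\rangle$; $G_2=\langle G_1,s_2\mid s_2^{-1}(x_iz_i)s_2=y_iz_i,\ 1\le i\le p\rangle$; $G_l=\langle G_{l-1},s_l\mid s_l^{-1}s_1s_l=s_{l-1}\rangle$ for $l\ge3$. *)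

theory Defs
  imports Main
begin

text \<open>A word over an alphabet 'a is a list of letters with a sign (True = the letter, False = its inverse).\<close>
type_synonym 'a word = "('a \<times> bool) list"

definition inv_word :: "'a word \<Rightarrow> 'a word" where
  "inv_word w = rev (map (\<lambda>(a, b). (a, \<not> b)) w)"

definition map_word :: "('a \<Rightarrow> 'b) \<Rightarrow> 'a word \<Rightarrow> 'b word" where
  "map_word f w = map (\<lambda>(a, b). (f a, b)) w"

fun reduced :: "'a word \<Rightarrow> bool" where
  "reduced [] = True"
| "reduced [x] = True"
| "reduced ((a, b) # (c, d) # w) = (\<not> (a = c \<and> b \<noteq> d) \<and> reduced ((c, d) # w))"

text \<open>Equality of words in the group presented by all letters of 'a and relators R:
  the congruence generated by free cancellation and insertion/deletion of relators.\<close>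
inductive pres_eq :: "'a word set \<Rightarrow> 'a word \<Rightarrow> 'a word \<Rightarrow> bool" for R where
  refl: "pres_eq R w w"
| sym: "pres_eq R u v \<Longrightarrow> pres_eq R v u"
| trans: "pres_eq R u v \<Longrightarrow> pres_eq R v w \<Longrightarrow> pres_eq R u w"
| cancel: "pres_eq R (u @ [(a, b), (a, \<not> b)] @ v) (u @ v)"
| relator: "r \<in> R \<Longrightarrow> pres_eq R (u @ r @ v) (u @ v)"

definition eqrel :: "'a word \<Rightarrow> 'a word \<Rightarrow> 'a word" where
  "eqrel u v = u @ inv_word v"

definition commrel :: "'a \<Rightarrow> 'a \<Rightarrow> 'a word" where
  "commrel a b = [(a, True), (b, True), (a, False), (b, False)]"

definition wpow :: "'a \<Rightarrow> int \<Rightarrow> 'a word" where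
  "wpow a n = (if n \<ge> 0 then replicate (nat n) (a, True) else replicate (nat (- n)) (a, False))"

datatype 't gen = Hg 't | Xg nat | Yg nat | Zg nat | Sg nat

text \<open>Relators of G_m, given the relators RH of H (on the finite generating type 't),
  the basis d_1..d_p of F.  Indices of x_i, y_i, z_i range over 1..p, of s_l over 1..m.\<close>
definition G_rels :: "'t word set \<Rightarrow> (nat \<Rightarrow> 't) \<Rightarrow> nat \<Rightarrow> nat \<Rightarrow> 't gen word set" where
  "G_rels RH d p m =
     map_word Hg ` RH
   \<union> {commrel (Xg i) (Yg j) | i j. i \<in> {1..p} \<and> j \<in> {1..p}}
   \<union> {commrel (Xg i) (Zg j) | i j. i \<in> {1..p} \<and> j \<in> {1..p}}
   \<union> {commrel (Yg i) (Zg j) | i j. i \<in> {1..p} \<and> j \<in> {1..p}}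
   \<union> {eqrel [(Hg (d i), True)] [(Xg i, True), (Yg i, False)] | i. i \<in> {1..p}}
   \<union> {commrel (Sg 1) (Hg t) | t. True}
   \<union> {commrel (Sg 1) g | g i. i \<in> {1..p} \<and> g \<in> {Xg i, Yg i, Zg i}}
   \<union> {eqrel [(Sg 2, False), (Xg i, True), (Zg i, True), (Sg 2, True)] [(Yg i, True), (Zg i, True)]
       | i. 2 \<le> m \<and> i \<in> {1..p}}
   \<union> {eqrel [(Sg l, False), (Sg 1, True), (Sg l, True)] [(Sg (l - 1), True)] | l. 3 \<le> l \<and> l \<le> m}"

end

theory Submission
  imports Defs
begin

text \<open>
  Send \<open>H\<close>, \<open>F\<^sub>x\<close>, \<open>F\<^sub>y\<close>, \<open>F\<^sub>z\<close> to \<open>I\<close> and \<open>s\<^sub>l\<close> to the shear \<open>I + v (-y, x)\<close> along a vector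
  \<open>v = v\<^sub>l = (x, y)\<close>, where \<open>v\<^sub>1 = (1, 0)\<close> and \<open>v\<^sub>l = (-l, 1)\<close> for \<open>l \<ge> 2\<close>. Conjugation by \<open>A\<close> turns
  the shear along \<open>v\<close> into the shear along \<open>A\<^sup>-\<^sup>1 v\<close>, and the shear along \<open>v\<^sub>l\<close> moves \<open>v\<^sub>1\<close> to
  \<open>v\<^sub>l\<^sub>-\<^sub>1\<close>; so this is a representation \<open>G\<^sub>m \<rightarrow> SL(2,\<int>)\<close>. The image of \<open>s\<^sub>i\<^sup>p s\<^sub>j\<^sup>q s\<^sub>k\<^sup>r\<close> is a
  product of shears along pairwise independent directions. Comparing traces
  (\<open>tr (shear v a \<cdot> shear w b) = 2 - a b (v \<times> w)\<^sup>2\<close>, while every shear has trace 2) gives \<open>p q = 0\<close>,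
  and two shears along independent directions agree only if both are trivial.
\<close>

datatype mat2 = Mat2 int int int int

instantiation mat2 :: monoid_mult
begin

fun times_mat2 :: "mat2 \<Rightarrow> mat2 \<Rightarrow> mat2" where
  "Mat2 a b c d * Mat2 a' b' c' d' =
     Mat2 (a * a' + b * c') (a * b' + b * d') (c * a' + d * c') (c * b' + d * d')"

definition one_mat2 :: mat2 where
  "1 = Mat2 1 0 0 1"

instance
proof
  fix A B C :: mat2
  show "A * B * C = A * (B * C)"
    by (cases A; cases B; cases C) (simp add: algebra_simps)
  show "1 * A = A" "A * 1 = A"
    by (cases A; simp add: one_mat2_def)+
qed

end

fun det2 :: "mat2 \<Rightarrow> int" where
  "det2 (Mat2 a b c d) = a * d - b * c"

fun trace2 :: "mat2 \<Rightarrow> int" where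
  "trace2 (Mat2 a b c d) = a + d"

fun adj2 :: "mat2 \<Rightarrow> mat2" where
  "adj2 (Mat2 a b c d) = Mat2 d (- b) (- c) a"

fun mat2_apply :: "mat2 \<Rightarrow> int \<times> int \<Rightarrow> int \<times> int" where
  "mat2_apply (Mat2 a b c d) (x, y) = (a * x + b * y, c * x + d * y)"

lemma mult_adj2_right: "det2 A = 1 \<Longrightarrow> A * adj2 A = 1"
  and mult_adj2_left: "det2 A = 1 \<Longrightarrow> adj2 A * A = 1"
  by (cases A; simp add: one_mat2_def algebra_simps)+

lemma adj2_one [simp]: "adj2 1 = 1"
  by (simp add: one_mat2_def)

fun cross :: "int \<times> int \<Rightarrow> int \<times> int \<Rightarrow> int" where
  "cross (a, b) (c, d) = a * d - b * c"

fun shear :: "int \<times> int \<Rightarrow> int \<Rightarrow> mat2" where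
  "shear (x, y) n = Mat2 (1 - n * x * y) (n * x\<^sup>2) (- n * y\<^sup>2) (1 + n * x * y)"

lemma det2_shear: "det2 (shear v n) = 1"
  by (cases v) (simp add: algebra_simps power2_eq_square)

lemma trace2_shear: "trace2 (shear v n) = 2"
  by (cases v) simp

lemma shear_zero [simp]: "shear v 0 = 1"
  by (cases v) (simp add: one_mat2_def)

lemma shear_mult_shear: "shear v n * shear v k = shear v (n + k)"
  by (cases v) (simp add: algebra_simps power2_eq_square)

lemma adj2_shear: "adj2 (shear v n) = shear v (- n)"
  by (cases v) simp

lemma shear_conj:
  assumes "det2 A = 1"
  shows "adj2 A * shear v n * A = shear (mat2_apply (adj2 A) v) n"
  using assms by (cases A; cases v) (simp add: power2_eq_square algebra_simps)

lemma trace2_shear_mult: "trace2 (shear v n * shear w k) = 2 - n * k * (cross v w)\<^sup>2"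
  by (cases v; cases w) (simp add: power2_eq_square algebra_simps)

lemma shear_power: "shear v n ^ k = shear v (int k * n)"
  by (induction k) (simp_all add: shear_mult_shear algebra_simps)

lemma shear_eq_shear_imp_zero:
  assumes "shear v n = shear w k" and "cross v w \<noteq> 0"
  shows "n = 0 \<and> k = 0"
proof -
  obtain a b c d where v: "v = (a, b)" and w: "w = (c, d)" by fastforce
  have "n * a\<^sup>2 = k * c\<^sup>2" "n * b\<^sup>2 = k * d\<^sup>2" "n * a * b = k * c * d"
    using assms(1) by (simp_all add: v w)
  then have "n * (cross v w)\<^sup>2 = 0" "k * (cross v w)\<^sup>2 = 0"
    by (simp_all add: v w) algebra+
  with assms(2) show ?thesis by simp
qed

lemma shear_triple_eq_one_imp_zero:
  assumes "shear u n * shear v k * shear w l = 1"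
    and "cross u v \<noteq> 0" "cross u w \<noteq> 0" "cross v w \<noteq> 0"
  shows "n = 0 \<and> k = 0 \<and> l = 0"
proof -
  have "shear u n * shear v k = shear u n * shear v k * shear w l * shear w (- l)"
    by (simp add: mult.assoc shear_mult_shear)
  then have prod: "shear u n * shear v k = shear w (- l)"
    using assms(1) by simp
  then have "n * k * (cross u v)\<^sup>2 = 0"
    using trace2_shear_mult[of u n v k] trace2_shear[of w] by simp
  with assms(2) consider "n = 0" | "k = 0" by auto
  then show ?thesis
  proof cases
    case 1
    with prod shear_eq_shear_imp_zero[of v k w "- l"] assms(4) show ?thesis by simp
  next
    case 2
    with prod shear_eq_shear_imp_zero[of u n w "- l"] assms(3) show ?thesis by simp
  qed
qed

definition word_eval :: "('a \<Rightarrow> 'm::monoid_mult) \<Rightarrow> ('a \<Rightarrow> 'm) \<Rightarrow> 'a word \<Rightarrow> 'm" where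
  "word_eval f g w = prod_list (map (\<lambda>(a, b). if b then f a else g a) w)"

lemma word_eval_Nil [simp]: "word_eval f g [] = 1"
  and word_eval_Cons [simp]:
    "word_eval f g ((a, b) # w) = (if b then f a else g a) * word_eval f g w"
  and word_eval_append [simp]: "word_eval f g (u @ v) = word_eval f g u * word_eval f g v"
  by (simp_all add: word_eval_def)

lemma word_eval_wpow:
  "word_eval f g (wpow a n) = (if 0 \<le> n then f a ^ nat n else g a ^ nat (- n))"
  by (simp add: word_eval_def wpow_def prod_list_replicate)

lemma pres_eq_word_eval:
  assumes "pres_eq R u v"
    and "\<And>r. r \<in> R \<Longrightarrow> word_eval f g r = 1"
    and "\<And>a. f a * g a = 1" "\<And>a. g a * f a = 1"
  shows "word_eval f g u = word_eval f g v"
  using assms(1)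
proof induction
  case (cancel u a b v)
  then show ?case
    using assms(3,4) by (cases b) (simp_all flip: mult.assoc)
next
  case (relator r u v)
  then show ?case
    using assms(2) by simp
qed simp_all

definition shear_dir :: "nat \<Rightarrow> int \<times> int" where
  "shear_dir l = (if l = 1 then (1, 0) else (- int l, 1))"

fun sl2_rep :: "'t gen \<Rightarrow> mat2" where
  "sl2_rep (Sg l) = shear (shear_dir l) 1"
| "sl2_rep _ = 1"

lemma cross_shear_dir_neq_0: "l \<noteq> l' \<Longrightarrow> cross (shear_dir l) (shear_dir l') \<noteq> 0"
  by (simp add: shear_dir_def)

lemma det2_sl2_rep: "det2 (sl2_rep g) = 1"
  by (cases g) (simp_all add: det2_shear one_mat2_def)

lemma shear_dir_conj:
  assumes "3 \<le> l"
  shows "adj2 (shear (shear_dir l) 1) * shear (shear_dir 1) 1 * shear (shear_dir l) 1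
    = shear (shear_dir (l - 1)) 1"
proof -
  have "mat2_apply (adj2 (shear (shear_dir l) 1)) (shear_dir 1) = shear_dir (l - 1)"
    using assms by (simp add: shear_dir_def of_nat_diff)
  then show ?thesis
    using shear_conj[OF det2_shear] by simp
qed

lemma word_eval_sl2_rep_G_rels:
  assumes "r \<in> G_rels RH d p m"
  shows "word_eval sl2_rep (\<lambda>a. adj2 (sl2_rep a)) r = 1"
proof -
  have H: "word_eval sl2_rep (\<lambda>a. adj2 (sl2_rep a)) (map_word Hg w) = 1" for w :: "'t word"
    by (induction w) (auto simp: map_word_def)
  have rel: "adj2 (shear (shear_dir l) 1) * shear (shear_dir 1) 1 * shear (shear_dir l) 1
      * adj2 (shear (shear_dir (l - 1)) 1) = 1" if "3 \<le> l" for l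
    unfolding shear_dir_conj[OF that] by (rule mult_adj2_right[OF det2_shear])
  show ?thesis
    using assms unfolding G_rels_def
    by (elim UnE) (auto simp: H commrel_def eqrel_def inv_word_def mult.assoc
        mult_adj2_right mult_adj2_left det2_shear rel[unfolded mult.assoc One_nat_def])
qed

lemma word_eval_sl2_rep_wpow_Sg:
  "word_eval sl2_rep (\<lambda>a. adj2 (sl2_rep a)) (wpow (Sg l) n) = shear (shear_dir l) n"
  by (simp add: word_eval_wpow adj2_shear shear_power)

theorem lemma3p5:
  fixes RH :: "('t::finite) word set" and d :: "nat \<Rightarrow> 't" and p m i j k :: nat
    and p' q r :: int
  assumes "finite RH"
    and "inj_on d {1..p}"
    and "\<And>w. set (map fst w) \<subseteq> {1..p} \<Longrightarrow> reduced w \<Longrightarrow> w \<noteq> []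
           \<Longrightarrow> \<not> pres_eq RH (map_word d w) []"
    and "1 \<le> i" "i < j" "j < k" "k \<le> m"
    and "pres_eq (G_rels RH d p m) (wpow (Sg i) p' @ wpow (Sg j) q @ wpow (Sg k) r) []"
  shows "p' = 0 \<and> q = 0 \<and> r = 0"
proof -
  have "shear (shear_dir i) p' * shear (shear_dir j) q * shear (shear_dir k) r = 1"
    using pres_eq_word_eval[OF assms(8) word_eval_sl2_rep_G_rels[of _ RH d p m]
        mult_adj2_right[OF det2_sl2_rep] mult_adj2_left[OF det2_sl2_rep]]
    by (simp add: word_eval_sl2_rep_wpow_Sg mult.assoc)
  then show ?thesis
    by (rule shear_triple_eq_one_imp_zero; intro cross_shear_dir_neq_0)
      (use assms(5,6) in linarith)+
qed

end
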